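(* Let $(\mathscr{N},K)$ be a PL-RDK system whose underlying network $\mathscr{N}$ has deficiency zero and which has a positive equilibrium. If a pair of reactions in one linkage class of $\mathscr{N}$ forms an SF-pair in a species $X$, then the system has absolute concentration robustness in $X$.
   Context: A CRN $\mathscr{N}=(\mathscr{S},\mathscr{C},\mathscr{R})$ has species $\mathscr{S}$, complexes $\mathscr{C}\subset\mathbb{R}^{\mathscr{S}}_{\ge0}$ and reactions $\mathscr{R}\subset\mathscr{C}\times\mathscr{C}$ (no reaction $y\to y$). Linkage classes are the connected components of the digraph $(\mathscr{C},\mathscr{R})$. The deficiency is $\delta=n-\ell-s$ with $n$ the number of complexes, $\ell$ the number of linkage classes and $s=\dim\mathrm{span}\{y'-y:y\to y'\in\mathscr{R}\}$. A power law kinetics has rate functions $K_j(x)=k_j\prod_X x_X^{F_{jX}}$ for $x\in\mathbb{R}^{\mathscr{S}}_{>0}$, with $k_j>0$ and $F$ a real kinetic order matrix whose row $F_{j,\cdot}$ is the kinetic order vector of reaction $R_j$; it is PL-RDK if reactions with the same reactant complex have identical kinetic order vectors. An SF-pair in $X$ is a pair of reactions whose kinetic order vectors differ only in the $X$-coordinate. A positive equilibrium is $c\in\mathbb{R}^{\mathscr{S}}_{>0}$ with $\sum_{y\to y'}K_{y\to y'}(c)(y'-y)=0$. ACR in $X$: a positive equilibrium exists and all positive equilibria have the same $X$-coordinate. *)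

theory Defs
  imports "HOL-Analysis.Analysis"
begin

text \<open>Species are indexed by a finite type 's; complexes are vectors in real^'s.
A reaction y \<rightarrow> y' is the pair (y, y').\<close>

type_synonym 's cplx = "real ^ 's"
type_synonym 's reaction = "'s cplx \<times> 's cplx"

definition CRN :: "'s::finite cplx set \<Rightarrow> 's reaction set \<Rightarrow> bool" where
  "CRN C R \<longleftrightarrow> finite C \<and> finite R \<and> R \<subseteq> C \<times> C
     \<and> (\<forall>y\<in>C. \<forall>X. 0 \<le> y $ X) \<and> (\<forall>r\<in>R. fst r \<noteq> snd r)"

definition linked :: "'s::finite reaction set \<Rightarrow> 's cplx \<Rightarrow> 's cplx \<Rightarrow> bool" where
  "linked R a b \<longleftrightarrow> (a, b) \<in> (R \<union> converse R)\<^sup>*"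

definition linkage_classes :: "'s::finite cplx set \<Rightarrow> 's reaction set \<Rightarrow> 's cplx set set" where
  "linkage_classes C R = C // {(a, b). a \<in> C \<and> b \<in> C \<and> linked R a b}"

definition stoich_rank :: "'s::finite reaction set \<Rightarrow> nat" where
  "stoich_rank R = dim (span {snd r - fst r | r. r \<in> R})"

definition deficiency :: "'s::finite cplx set \<Rightarrow> 's reaction set \<Rightarrow> int" where
  "deficiency C R = int (card C) - int (card (linkage_classes C R)) - int (stoich_rank R)"

text \<open>Power law kinetics: rate constants k and kinetic order vectors F (rows of the
kinetic order matrix), indexed by reactions.\<close>
definition PL_kinetics :: "'s::finite reaction set \<Rightarrow> ('s reaction \<Rightarrow> real) \<Rightarrow> bool" where
  "PL_kinetics R k \<longleftrightarrow> (\<forall>r\<in>R. 0 < k r)"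

definition rate :: "('s::finite reaction \<Rightarrow> real) \<Rightarrow> ('s reaction \<Rightarrow> real ^ 's)
     \<Rightarrow> 's reaction \<Rightarrow> real ^ 's \<Rightarrow> real" where
  "rate k F r x = k r * (\<Prod>X\<in>UNIV. (x $ X) powr (F r $ X))"

definition PL_RDK :: "'s::finite reaction set \<Rightarrow> ('s reaction \<Rightarrow> real ^ 's) \<Rightarrow> bool" where
  "PL_RDK R F \<longleftrightarrow> (\<forall>r1\<in>R. \<forall>r2\<in>R. fst r1 = fst r2 \<longrightarrow> F r1 = F r2)"

definition SF_pair :: "('s::finite reaction \<Rightarrow> real ^ 's) \<Rightarrow> 's reaction \<Rightarrow> 's reaction \<Rightarrow> 's \<Rightarrow> bool" where
  "SF_pair F r1 r2 X \<longleftrightarrow> F r1 $ X \<noteq> F r2 $ X \<and> (\<forall>Y. Y \<noteq> X \<longrightarrow> F r1 $ Y = F r2 $ Y)"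

definition pos_equilibrium :: "'s::finite reaction set \<Rightarrow> ('s reaction \<Rightarrow> real)
     \<Rightarrow> ('s reaction \<Rightarrow> real ^ 's) \<Rightarrow> real ^ 's \<Rightarrow> bool" where
  "pos_equilibrium R k F c \<longleftrightarrow> (\<forall>X. 0 < c $ X)
     \<and> (\<Sum>r\<in>R. rate k F r c *\<^sub>R (snd r - fst r)) = 0"

definition ACR :: "'s::finite reaction set \<Rightarrow> ('s reaction \<Rightarrow> real)
     \<Rightarrow> ('s reaction \<Rightarrow> real ^ 's) \<Rightarrow> 's \<Rightarrow> bool" where
  "ACR R k F X \<longleftrightarrow> (\<exists>c. pos_equilibrium R k F c)
     \<and> (\<forall>c1 c2. pos_equilibrium R k F c1 \<longrightarrow> pos_equilibrium R k F c2 \<longrightarrow> c1 $ X = c2 $ X)"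

end

theory Submission
  imports Defs
begin

(* Deficiency zero forces every flux vector with zero species formation rate to be complex
   balanced: choosing a representative in each linkage class, the differences y - rep y of the
   remaining complexes span the stoichiometric subspace and are exactly as many as its
   dimension, hence independent.  So every positive equilibrium is complex balanced.  For
   PL-RDK kinetics the rates at two equilibria c1, c2 differ by a factor
   u(y) = exp (F_y . (ln c2 - ln c1)) depending only on the reactant complex y, and complex
   balance at both equilibria gives  sum_r K_r(c1) (u(source r) - u(target r))^2 = 0, so u is
   constant on linkage classes.  For an SF-pair r1, r2 in X this leaves
   (F_r1,X - F_r2,X) (ln c2_X - ln c1_X) = 0, i.e. c1_X = c2_X. *)

section \<open>Linkage classes\<close>

lemma linked_refl: "linked R a a"
  by (simp add: linked_def)

lemma linked_sym:
  assumes "linked R a b"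
  shows "linked R b a"
proof -
  have "(b, a) \<in> ((R \<union> R\<inverse>)\<inverse>)\<^sup>*"
    using assms unfolding linked_def by (rule rtrancl_converseI)
  moreover have "(R \<union> R\<inverse>)\<inverse> = R \<union> R\<inverse>"
    by auto
  ultimately show ?thesis
    unfolding linked_def by simp
qed

lemma linked_trans: "linked R a b \<Longrightarrow> linked R b c \<Longrightarrow> linked R a c"
  unfolding linked_def by (rule rtrancl_trans)

lemma linked_reaction: "r \<in> R \<Longrightarrow> linked R (fst r) (snd r)"
  unfolding linked_def by (intro r_into_rtrancl) simp

lemma linked_invariant:
  assumes "\<And>r. r \<in> R \<Longrightarrow> f (fst r) = f (snd r)" and "linked R a b"
  shows "f a = f b"
  using \<open>linked R a b\<close> unfolding linked_def
proof (induction rule: rtrancl_induct)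
  case (step y z)
  then have "f y = f z"
    using assms(1)[of "(y, z)"] assms(1)[of "(z, y)"] by auto
  with step.IH show ?case
    by simp
qed simp

lemma linked_diff_in_span:
  assumes "linked R a b"
  shows "b - a \<in> span {snd r - fst r | r. r \<in> R}"
  using assms unfolding linked_def
proof (induction rule: rtrancl_induct)
  case (step y z)
  have "z - y \<in> span {snd r - fst r | r. r \<in> R}"
  proof (cases "(y, z) \<in> R")
    case True
    then show ?thesis
      by (intro span_base) force
  next
    case False
    with step.hyps have "y - z \<in> span {snd r - fst r | r. r \<in> R}"
      by (intro span_base) force
    then show ?thesis
      using span_neg by fastforce
  qed
  with step.IH show ?case
    using span_add by fastforce
qed (simp add: span_zero)

definition linkage_rep :: "'s::finite cplx set \<Rightarrow> 's reaction set \<Rightarrow> 's cplx \<Rightarrow> 's cplx" where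
  "linkage_rep C R y = (SOME z. z \<in> C \<and> linked R y z)"

lemma linkage_rep:
  assumes "y \<in> C"
  shows "linkage_rep C R y \<in> C" and "linked R y (linkage_rep C R y)"
proof -
  have "\<exists>z. z \<in> C \<and> linked R y z"
    using assms linked_refl by blast
  then have "linkage_rep C R y \<in> C \<and> linked R y (linkage_rep C R y)"
    unfolding linkage_rep_def by (rule someI_ex)
  then show "linkage_rep C R y \<in> C" and "linked R y (linkage_rep C R y)"
    by blast+
qed

lemma linkage_rep_eq_iff:
  assumes "y \<in> C" and "y' \<in> C"
  shows "linkage_rep C R y = linkage_rep C R y' \<longleftrightarrow> linked R y y'"
proof
  assume "linkage_rep C R y = linkage_rep C R y'"
  with linkage_rep(2)[OF assms(2)] have "linked R y' (linkage_rep C R y)"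
    by simp
  with linkage_rep(2)[OF assms(1)] show "linked R y y'"
    by (blast intro: linked_trans linked_sym)
next
  assume "linked R y y'"
  then have "(\<lambda>z. z \<in> C \<and> linked R y z) = (\<lambda>z. z \<in> C \<and> linked R y' z)"
    by (blast intro: linked_sym linked_trans)
  then show "linkage_rep C R y = linkage_rep C R y'"
    unfolding linkage_rep_def by simp
qed

lemma linkage_rep_idem:
  assumes "y \<in> C"
  shows "linkage_rep C R (linkage_rep C R y) = linkage_rep C R y"
  using linkage_rep[OF assms] linkage_rep_eq_iff[of "linkage_rep C R y" C y R] assms
  by (simp add: linked_sym)

lemma linkage_rep_fst_eq_snd:
  assumes "CRN C R" and "r \<in> R"
  shows "linkage_rep C R (fst r) = linkage_rep C R (snd r)"
proof -
  have "fst r \<in> C" and "snd r \<in> C"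
    using assms unfolding CRN_def by auto
  then show ?thesis
    using linkage_rep_eq_iff linked_reaction[OF assms(2)] by blast
qed

lemma card_linkage_rep_image: "card (linkage_rep C R ` C) = card (linkage_classes C R)"
proof -
  define cls where "cls y = {z. z \<in> C \<and> linked R y z}" for y
  have cls_rep: "cls (linkage_rep C R y) = cls y" if "y \<in> C" for y
    using linkage_rep[OF that] unfolding cls_def by (blast intro: linked_sym linked_trans)
  have "linkage_classes C R = cls ` C"
    unfolding linkage_classes_def quotient_def cls_def by auto
  also have "\<dots> = cls ` linkage_rep C R ` C"
    using cls_rep by (simp add: image_image)
  finally have "linkage_classes C R = cls ` linkage_rep C R ` C" .
  moreover have "inj_on cls (linkage_rep C R ` C)"
  proof (rule inj_onI)
    fix a b assume "a \<in> linkage_rep C R ` C" "b \<in> linkage_rep C R ` C" "cls a = cls b"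
    then obtain y y' where "y \<in> C" "y' \<in> C" "a = linkage_rep C R y" "b = linkage_rep C R y'"
      and "cls y = cls y'"
      using cls_rep by auto
    then have "linked R y y'"
      using \<open>y' \<in> C\<close> linked_refl unfolding cls_def by blast
    then show "a = b"
      using \<open>y \<in> C\<close> \<open>y' \<in> C\<close> \<open>a = _\<close> \<open>b = _\<close> linkage_rep_eq_iff by blast
  qed
  ultimately show ?thesis
    by (simp add: card_image)
qed

section \<open>Fluxes on a reaction graph\<close>

definition inflow :: "('c \<times> 'c) set \<Rightarrow> ('c \<times> 'c \<Rightarrow> real) \<Rightarrow> 'c \<Rightarrow> real" where
  "inflow R a z = (\<Sum>r\<in>{r \<in> R. snd r = z}. a r)"

definition outflow :: "('c \<times> 'c) set \<Rightarrow> ('c \<times> 'c \<Rightarrow> real) \<Rightarrow> 'c \<Rightarrow> real" where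
  "outflow R a z = (\<Sum>r\<in>{r \<in> R. fst r = z}. a r)"

definition net_flux :: "('c \<times> 'c) set \<Rightarrow> ('c \<times> 'c \<Rightarrow> real) \<Rightarrow> 'c \<Rightarrow> real" where
  "net_flux R a z = inflow R a z - outflow R a z"

definition complex_balanced :: "'c set \<Rightarrow> ('c \<times> 'c) set \<Rightarrow> ('c \<times> 'c \<Rightarrow> real) \<Rightarrow> bool" where
  "complex_balanced C R a \<longleftrightarrow> (\<forall>z\<in>C. inflow R a z = outflow R a z)"

lemma sum_scaleR_target_eq_inflow:
  fixes f :: "'c \<Rightarrow> 'v::real_vector"
  assumes "finite C" and "finite R" and "snd ` R \<subseteq> C"
  shows "(\<Sum>r\<in>R. a r *\<^sub>R f (snd r)) = (\<Sum>z\<in>C. inflow R a z *\<^sub>R f z)"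
proof -
  have "(\<Sum>z\<in>C. inflow R a z *\<^sub>R f z) = (\<Sum>z\<in>C. \<Sum>r\<in>{r \<in> R. snd r = z}. a r *\<^sub>R f (snd r))"
    unfolding inflow_def scaleR_sum_left by (intro sum.cong) auto
  also have "\<dots> = (\<Sum>r\<in>R. a r *\<^sub>R f (snd r))"
    by (rule sum.group[OF assms(2,1,3)])
  finally show ?thesis ..
qed

lemma sum_scaleR_source_eq_outflow:
  fixes f :: "'c \<Rightarrow> 'v::real_vector"
  assumes "finite C" and "finite R" and "fst ` R \<subseteq> C"
  shows "(\<Sum>r\<in>R. a r *\<^sub>R f (fst r)) = (\<Sum>z\<in>C. outflow R a z *\<^sub>R f z)"
proof -
  have "(\<Sum>z\<in>C. outflow R a z *\<^sub>R f z) = (\<Sum>z\<in>C. \<Sum>r\<in>{r \<in> R. fst r = z}. a r *\<^sub>R f (fst r))"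
    unfolding outflow_def scaleR_sum_left by (intro sum.cong) auto
  also have "\<dots> = (\<Sum>r\<in>R. a r *\<^sub>R f (fst r))"
    by (rule sum.group[OF assms(2,1,3)])
  finally show ?thesis ..
qed

lemma sum_inflow_eq_sum_outflow:
  assumes "finite C" and "finite R" and "R \<subseteq> C \<times> C" and "Q \<subseteq> C"
    and closed: "\<And>r. r \<in> R \<Longrightarrow> fst r \<in> Q \<longleftrightarrow> snd r \<in> Q"
  shows "(\<Sum>z\<in>Q. inflow R a z) = (\<Sum>z\<in>Q. outflow R a z)"
proof -
  have restrict: "(\<Sum>z\<in>C. f z *\<^sub>R indicator Q z) = (\<Sum>z\<in>Q. f z)" for f :: "_ \<Rightarrow> real"
    using assms(1,4) by (intro sum.mono_neutral_cong_right) auto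
  have "fst ` R \<subseteq> C" and "snd ` R \<subseteq> C"
    using assms(3) by auto
  have "(\<Sum>z\<in>Q. inflow R a z) = (\<Sum>z\<in>C. inflow R a z *\<^sub>R indicator Q z)"
    by (rule restrict[symmetric])
  also have "\<dots> = (\<Sum>r\<in>R. a r *\<^sub>R indicator Q (snd r))"
    by (rule sum_scaleR_target_eq_inflow[OF assms(1,2) \<open>snd ` R \<subseteq> C\<close>, symmetric])
  also have "\<dots> = (\<Sum>r\<in>R. a r *\<^sub>R indicator Q (fst r))"
    using closed by (intro sum.cong) (auto simp: indicator_def)
  also have "\<dots> = (\<Sum>z\<in>C. outflow R a z *\<^sub>R indicator Q z)"
    by (rule sum_scaleR_source_eq_outflow[OF assms(1,2) \<open>fst ` R \<subseteq> C\<close>])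
  also have "\<dots> = (\<Sum>z\<in>Q. outflow R a z)"
    by (rule restrict)
  finally show ?thesis .
qed

lemma complex_balanced_sum_target_eq_sum_source:
  fixes f :: "'c \<Rightarrow> real"
  assumes fin: "finite C" "finite R" and RC: "R \<subseteq> C \<times> C"
    and bal: "complex_balanced C R a"
  shows "(\<Sum>r\<in>R. a r * f (snd r)) = (\<Sum>r\<in>R. a r * f (fst r))"
proof -
  have src: "fst ` R \<subseteq> C" and tgt: "snd ` R \<subseteq> C"
    using RC by auto
  have "(\<Sum>r\<in>R. a r * f (snd r)) = (\<Sum>z\<in>C. inflow R a z * f z)"
    using sum_scaleR_target_eq_inflow[OF fin tgt, of a f] by simp
  also have "\<dots> = (\<Sum>z\<in>C. outflow R a z * f z)"
    using bal unfolding complex_balanced_def by (intro sum.cong) auto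
  also have "\<dots> = (\<Sum>r\<in>R. a r * f (fst r))"
    using sum_scaleR_source_eq_outflow[OF fin src, of a f] by simp
  finally show ?thesis .
qed

(* Both the squared and the cross terms of sum_r w r (u (fst r) - u (snd r))^2 reduce to
   sum_r w r u (fst r)^2, by complex balance of w and of w u(source) respectively. *)
lemma complex_balanced_rescaled_imp_eq:
  fixes u :: "'c \<Rightarrow> real"
  assumes fin: "finite C" "finite R" and RC: "R \<subseteq> C \<times> C"
    and pos: "\<And>r. r \<in> R \<Longrightarrow> 0 < w r"
    and bal: "complex_balanced C R w" and bal_u: "complex_balanced C R (\<lambda>r. w r * u (fst r))"
    and "r \<in> R"
  shows "u (fst r) = u (snd r)"
proof -
  have sq: "(\<Sum>r\<in>R. w r * u (snd r)^2) = (\<Sum>r\<in>R. w r * u (fst r)^2)"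
    using complex_balanced_sum_target_eq_sum_source[OF fin RC bal, of "\<lambda>z. u z^2"] .
  have "(\<Sum>r\<in>R. w r * u (fst r) * u (snd r)) = (\<Sum>r\<in>R. w r * u (fst r) * u (fst r))"
    using complex_balanced_sum_target_eq_sum_source[OF fin RC bal_u, of u] .
  then have cross: "(\<Sum>r\<in>R. w r * u (fst r) * u (snd r)) = (\<Sum>r\<in>R. w r * u (fst r)^2)"
    by (simp add: power2_eq_square mult.assoc)
  have "w r * (u (fst r) - u (snd r))^2
      = w r * u (fst r)^2 - 2 * (w r * u (fst r) * u (snd r)) + w r * u (snd r)^2" for r
    by (simp add: power2_diff algebra_simps)
  then have "(\<Sum>r\<in>R. w r * (u (fst r) - u (snd r))^2)
      = (\<Sum>r\<in>R. w r * u (fst r)^2) - 2 * (\<Sum>r\<in>R. w r * u (fst r) * u (snd r))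
        + (\<Sum>r\<in>R. w r * u (snd r)^2)"
    by (simp add: sum.distrib sum_subtractf sum_distrib_left)
  also have "\<dots> = 0"
    unfolding sq cross by simp
  finally have sum_eq_0: "(\<Sum>r\<in>R. w r * (u (fst r) - u (snd r))^2) = 0" .
  have nonneg: "0 \<le> w r * (u (fst r) - u (snd r))^2" if "r \<in> R" for r
    using pos[OF that] by simp
  have "w r * (u (fst r) - u (snd r))^2 = 0"
    using sum_nonneg_eq_0_iff[OF fin(2) nonneg] sum_eq_0 \<open>r \<in> R\<close> by simp
  then show ?thesis
    using pos[OF \<open>r \<in> R\<close>] by simp
qed

section \<open>Deficiency zero networks\<close>

lemma independent_image_coefficient_eq_0:
  fixes e :: "'a \<Rightarrow> 'v::real_vector"
  assumes "finite A" and "inj_on e A" and "independent (e ` A)"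
    and "(\<Sum>x\<in>A. c x *\<^sub>R e x) = 0" and "x \<in> A"
  shows "c x = 0"
proof -
  have "(\<Sum>w\<in>e ` A. c (inv_into A e w) *\<^sub>R w) = (\<Sum>x\<in>A. c x *\<^sub>R e x)"
    using assms(2) by (simp add: sum.reindex)
  with assms(1,3,4) have "\<forall>w\<in>e ` A. c (inv_into A e w) = 0"
    using dependent_finite[of "e ` A"] by auto
  with assms(5) have "c (inv_into A e (e x)) = 0"
    by blast
  with assms(2,5) show ?thesis
    by simp
qed

(* The vectors y - rep y with y not a representative span the stoichiometric subspace, and
   deficiency zero says that there are exactly as many of them as its dimension. *)
lemma deficiency_zero_independent:
  fixes C :: "'s::finite cplx set"
  assumes crn: "CRN C R" and def0: "deficiency C R = 0"
  defines "T \<equiv> linkage_rep C R ` C" and "e \<equiv> \<lambda>y. y - linkage_rep C R y"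
  shows "inj_on e (C - T)" and "independent (e ` (C - T))"
proof -
  have fin: "finite C" and RC: "R \<subseteq> C \<times> C"
    using crn by (auto simp: CRN_def)
  define S where "S = span {snd r - fst r | r. r \<in> R}"
  have e_in_S: "e y \<in> S" if "y \<in> C" for y
    using linked_diff_in_span[OF linked_sym[OF linkage_rep(2)[OF that]]]
    unfolding e_def S_def .
  have e_span: "e y \<in> span (e ` (C - T))" if "y \<in> C" for y
  proof (cases "y \<in> T")
    case True
    then have "e y = 0"
      unfolding T_def e_def by (auto simp: linkage_rep_idem)
    then show ?thesis
      by (simp add: span_zero)
  next
    case False
    with that show ?thesis
      by (intro span_base imageI) simp
  qed
  have "snd r - fst r \<in> span (e ` (C - T))" if "r \<in> R" for r
  proof -
    have "snd r - fst r = e (snd r) - e (fst r)"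
      using linkage_rep_fst_eq_snd[OF crn that] unfolding e_def by simp
    moreover have "fst r \<in> C" and "snd r \<in> C"
      using that RC by auto
    ultimately show ?thesis
      using e_span by (simp add: span_diff)
  qed
  then have S_span: "S \<subseteq> span (e ` (C - T))"
    unfolding S_def by (intro span_minimal subspace_span) blast
  have "card (C - T) = dim S"
  proof -
    have "T \<subseteq> C"
      unfolding T_def using linkage_rep(1) by blast
    then have "card (C - T) = card C - card T"
      using fin by (simp add: card_Diff_subset finite_subset)
    moreover have "card T \<le> card C"
      using \<open>T \<subseteq> C\<close> fin by (simp add: card_mono)
    ultimately show ?thesis
      using def0 card_linkage_rep_image[of C R]
      unfolding deficiency_def stoich_rank_def S_def T_def by simp
  qed
  moreover have "dim S \<le> card (e ` (C - T))"
    using S_span fin by (simp add: dim_le_card)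
  moreover have "card (e ` (C - T)) \<le> card (C - T)"
    using fin by (simp add: card_image_le)
  ultimately have card_eq: "card (e ` (C - T)) = card (C - T)"
    by simp
  then show "inj_on e (C - T)"
    using fin by (simp add: eq_card_imp_inj_on)
  show "independent (e ` (C - T))"
  proof (rule card_le_dim_spanning)
    show "e ` (C - T) \<subseteq> S"
      using e_in_S by blast
    show "finite (e ` (C - T))"
      using fin by simp
    show "card (e ` (C - T)) \<le> dim S"
      using card_eq \<open>card (C - T) = dim S\<close> by simp
  qed (fact S_span)
qed

lemma sum_net_flux_scaleR:
  fixes R :: "('v::real_vector \<times> 'v) set"
  assumes "finite C" and "finite R" and "R \<subseteq> C \<times> C"
  shows "(\<Sum>z\<in>C. net_flux R a z *\<^sub>R z) = (\<Sum>r\<in>R. a r *\<^sub>R (snd r - fst r))"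
proof -
  have "fst ` R \<subseteq> C" and "snd ` R \<subseteq> C"
    using assms(3) by auto
  have "(\<Sum>z\<in>C. net_flux R a z *\<^sub>R z) = (\<Sum>z\<in>C. inflow R a z *\<^sub>R z) - (\<Sum>z\<in>C. outflow R a z *\<^sub>R z)"
    unfolding net_flux_def by (simp add: scaleR_left_diff_distrib sum_subtractf)
  also have "\<dots> = (\<Sum>r\<in>R. a r *\<^sub>R snd r) - (\<Sum>r\<in>R. a r *\<^sub>R fst r)"
    using sum_scaleR_target_eq_inflow[OF assms(1,2) \<open>snd ` R \<subseteq> C\<close>, of a "\<lambda>z. z"]
      sum_scaleR_source_eq_outflow[OF assms(1,2) \<open>fst ` R \<subseteq> C\<close>, of a "\<lambda>z. z"]
    by simp
  also have "\<dots> = (\<Sum>r\<in>R. a r *\<^sub>R (snd r - fst r))"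
    by (simp add: scaleR_diff_right sum_subtractf)
  finally show ?thesis .
qed

lemma sum_net_flux_linkage_class:
  fixes C :: "'s::finite cplx set"
  assumes crn: "CRN C R"
  shows "(\<Sum>z | z \<in> C \<and> linkage_rep C R z = t. net_flux R a z) = 0"
proof -
  define Q where "Q = {z. z \<in> C \<and> linkage_rep C R z = t}"
  have fin: "finite C" "finite R" and RC: "R \<subseteq> C \<times> C"
    using crn by (auto simp: CRN_def)
  have closed: "fst r \<in> Q \<longleftrightarrow> snd r \<in> Q" if "r \<in> R" for r
    using that RC linkage_rep_fst_eq_snd[OF crn that] unfolding Q_def by auto
  have "Q \<subseteq> C"
    unfolding Q_def by blast
  have "(\<Sum>z\<in>Q. inflow R a z) = (\<Sum>z\<in>Q. outflow R a z)"
    by (rule sum_inflow_eq_sum_outflow[OF fin RC \<open>Q \<subseteq> C\<close> closed])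
  then show ?thesis
    unfolding net_flux_def Q_def by (simp add: sum_subtractf)
qed

lemma sum_net_flux_scaleR_linkage_rep:
  fixes C :: "'s::finite cplx set"
  assumes crn: "CRN C R"
  shows "(\<Sum>z\<in>C. net_flux R a z *\<^sub>R linkage_rep C R z) = 0"
proof -
  have fin: "finite C"
    using crn by (simp add: CRN_def)
  have "(\<Sum>z\<in>C. net_flux R a z *\<^sub>R linkage_rep C R z)
      = (\<Sum>t\<in>linkage_rep C R ` C. \<Sum>z | z \<in> C \<and> linkage_rep C R z = t. net_flux R a z *\<^sub>R linkage_rep C R z)"
    by (rule sum.group[symmetric, OF fin finite_imageI[OF fin] order_refl])
  also have "\<dots> = (\<Sum>t\<in>linkage_rep C R ` C. \<Sum>z | z \<in> C \<and> linkage_rep C R z = t. net_flux R a z *\<^sub>R t)"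
    by (intro sum.cong) auto
  also have "\<dots> = (\<Sum>t\<in>linkage_rep C R ` C. (\<Sum>z | z \<in> C \<and> linkage_rep C R z = t. net_flux R a z) *\<^sub>R t)"
    by (simp add: scaleR_sum_left)
  also have "\<dots> = 0"
    using sum_net_flux_linkage_class[OF crn] by simp
  finally show ?thesis .
qed

(* The net fluxes v satisfy sum_z v z *R z = 0 and sum to zero over each linkage class, hence
   sum_z v z *R (z - rep z) = 0; independence kills v off the representatives, and the class
   sums then kill it on them. *)
theorem deficiency_zero_imp_complex_balanced:
  fixes C :: "'s::finite cplx set"
  assumes crn: "CRN C R" and def0: "deficiency C R = 0"
    and flux: "(\<Sum>r\<in>R. a r *\<^sub>R (snd r - fst r)) = 0"
  shows "complex_balanced C R a"
proof -
  have fin: "finite C" "finite R" and RC: "R \<subseteq> C \<times> C"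
    using crn by (auto simp: CRN_def)
  define T where "T = linkage_rep C R ` C"
  define e where "e = (\<lambda>y. y - linkage_rep C R y)"
  have T_sub: "T \<subseteq> C" and rep_T: "\<And>t. t \<in> T \<Longrightarrow> linkage_rep C R t = t"
    unfolding T_def by (auto simp: linkage_rep(1) linkage_rep_idem)
  have "(\<Sum>z\<in>C - T. net_flux R a z *\<^sub>R e z) = (\<Sum>z\<in>C. net_flux R a z *\<^sub>R e z)"
    using fin(1) rep_T unfolding e_def by (intro sum.mono_neutral_left) auto
  also have "\<dots> = (\<Sum>r\<in>R. a r *\<^sub>R (snd r - fst r)) - (\<Sum>z\<in>C. net_flux R a z *\<^sub>R linkage_rep C R z)"
    unfolding e_def sum_net_flux_scaleR[OF fin RC, symmetric]
    by (simp add: scaleR_diff_right sum_subtractf)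
  also have "\<dots> = 0"
    unfolding flux sum_net_flux_scaleR_linkage_rep[OF crn] by simp
  finally have sum_e: "(\<Sum>z\<in>C - T. net_flux R a z *\<^sub>R e z) = 0" .
  have "finite (C - T)"
    using fin by simp
  note e_indep = deficiency_zero_independent[OF crn def0, folded T_def e_def]
  have off_T: "net_flux R a z = 0" if "z \<in> C - T" for z
    by (rule independent_image_coefficient_eq_0[OF \<open>finite (C - T)\<close> e_indep sum_e that])
  have on_T: "net_flux R a t = 0" if "t \<in> T" for t
  proof -
    define Q where "Q = {z. z \<in> C - T \<and> linkage_rep C R z = t}"
    have "{z. z \<in> C \<and> linkage_rep C R z = t} = insert t Q"
      using that T_sub rep_T unfolding Q_def by auto
    moreover have "finite Q" and "t \<notin> Q" and "sum (net_flux R a) Q = 0"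
      using fin(1) that off_T unfolding Q_def by auto
    ultimately show ?thesis
      using sum_net_flux_linkage_class[OF crn, of a t] by simp
  qed
  show ?thesis
    using off_T on_T unfolding complex_balanced_def net_flux_def by auto
qed

section \<open>Power law kinetics\<close>

definition ln_vec :: "real ^ 'n \<Rightarrow> real ^ 'n" where
  "ln_vec x = (\<chi> i. ln (x $ i))"

lemma rate_eq_exp_inner:
  assumes "\<forall>Y. 0 < x $ Y"
  shows "rate k F r x = k r * exp (F r \<bullet> ln_vec x)"
proof -
  have "x $ Y powr F r $ Y = exp (F r $ Y * ln (x $ Y))" for Y
    using assms[rule_format, of Y] by (simp add: powr_def mult.commute)
  then show ?thesis
    by (simp add: rate_def exp_sum inner_vec_def ln_vec_def)
qed

lemma rate_eq_rate_mult_exp: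
  assumes "\<forall>Y. 0 < c1 $ Y" and "\<forall>Y. 0 < c2 $ Y"
  shows "rate k F r c2 = rate k F r c1 * exp (F r \<bullet> (ln_vec c2 - ln_vec c1))"
  unfolding rate_eq_exp_inner[OF assms(1)] rate_eq_exp_inner[OF assms(2)]
  by (simp add: inner_diff_right exp_diff)

lemma PL_RDK_reactant_orders:
  assumes "PL_RDK R F"
  obtains G where "\<And>r. r \<in> R \<Longrightarrow> F r = G (fst r)"
proof -
  define G where "G z = F (SOME r. r \<in> R \<and> fst r = z)" for z
  have "F r = G (fst r)" if "r \<in> R" for r
  proof -
    define s where "s = (SOME s. s \<in> R \<and> fst s = fst r)"
    have "\<exists>s. s \<in> R \<and> fst s = fst r"
      using that by blast
    then have "s \<in> R \<and> fst s = fst r"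
      unfolding s_def by (rule someI_ex)
    then have "F s = F r"
      using assms that unfolding PL_RDK_def by blast
    then show ?thesis
      unfolding G_def s_def by simp
  qed
  then show ?thesis
    by (rule that)
qed

lemma inner_diff_SF_pair:
  assumes "SF_pair F r1 r2 X"
  shows "(F r1 - F r2) \<bullet> d = (F r1 $ X - F r2 $ X) * d $ X"
proof -
  have "(F r1 - F r2) \<bullet> d = (\<Sum>Y\<in>UNIV. (F r1 $ Y - F r2 $ Y) * d $ Y)"
    by (simp add: inner_vec_def)
  also have "\<dots> = (\<Sum>Y\<in>UNIV. if Y = X then (F r1 $ X - F r2 $ X) * d $ X else 0)"
    using assms unfolding SF_pair_def by (intro sum.cong) auto
  also have "\<dots> = (F r1 $ X - F r2 $ X) * d $ X"
    by simp
  finally show ?thesis .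
qed

theorem deficiency_zero_PL_RDK_inner_ln_diff_eq:
  fixes C :: "'s::finite cplx set"
  assumes crn: "CRN C R" and kin: "PL_kinetics R k" and rdk: "PL_RDK R F"
    and def0: "deficiency C R = 0"
    and eq1: "pos_equilibrium R k F c1" and eq2: "pos_equilibrium R k F c2"
    and "r1 \<in> R" and "r2 \<in> R" and linked: "linked R (fst r1) (fst r2)"
  shows "F r1 \<bullet> (ln_vec c2 - ln_vec c1) = F r2 \<bullet> (ln_vec c2 - ln_vec c1)"
proof -
  have fin: "finite C" "finite R" and RC: "R \<subseteq> C \<times> C"
    using crn by (auto simp: CRN_def)
  obtain G where G: "\<And>r. r \<in> R \<Longrightarrow> F r = G (fst r)"
    using PL_RDK_reactant_orders[OF rdk] by blast
  define d where "d = ln_vec c2 - ln_vec c1"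
  define w where "w r = rate k F r c1" for r
  define u where "u z = exp (G z \<bullet> d)" for z
  have c1_pos: "\<forall>Y. 0 < c1 $ Y" and c2_pos: "\<forall>Y. 0 < c2 $ Y"
    using eq1 eq2 by (simp_all add: pos_equilibrium_def)
  have w_pos: "0 < w r" if "r \<in> R" for r
    using kin that unfolding w_def rate_eq_exp_inner[OF c1_pos] PL_kinetics_def by simp
  have rate2: "rate k F r c2 = w r * u (fst r)" if "r \<in> R" for r
    unfolding w_def u_def d_def rate_eq_rate_mult_exp[OF c1_pos c2_pos] G[OF that] ..
  have "(\<Sum>r\<in>R. w r *\<^sub>R (snd r - fst r)) = 0"
    using eq1 unfolding pos_equilibrium_def w_def by simp
  then have bal1: "complex_balanced C R w"
    by (rule deficiency_zero_imp_complex_balanced[OF crn def0])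
  have "(\<Sum>r\<in>R. (w r * u (fst r)) *\<^sub>R (snd r - fst r)) = (\<Sum>r\<in>R. rate k F r c2 *\<^sub>R (snd r - fst r))"
    using rate2 by (intro sum.cong) simp_all
  also have "\<dots> = 0"
    using eq2 by (simp add: pos_equilibrium_def)
  finally have bal2: "complex_balanced C R (\<lambda>r. w r * u (fst r))"
    by (rule deficiency_zero_imp_complex_balanced[OF crn def0])
  have "u (fst r) = u (snd r)" if "r \<in> R" for r
    by (rule complex_balanced_rescaled_imp_eq[OF fin RC w_pos bal1 bal2 that])
  then have "u (fst r1) = u (fst r2)"
    using linked_invariant[of R u, OF _ linked] by blast
  then show ?thesis
    unfolding u_def d_def G[OF \<open>r1 \<in> R\<close>] G[OF \<open>r2 \<in> R\<close>] by simp
qed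

theorem mainTheorem6:
  fixes C :: "'s::finite cplx set" and R :: "'s reaction set"
    and k :: "'s reaction \<Rightarrow> real" and F :: "'s reaction \<Rightarrow> real ^ 's"
    and r1 r2 :: "'s reaction" and X :: 's
  assumes "CRN C R"
    and "PL_kinetics R k"
    and "PL_RDK R F"
    and "deficiency C R = 0"
    and "\<exists>c. pos_equilibrium R k F c"
    and "r1 \<in> R" and "r2 \<in> R"
    and "linked R (fst r1) (fst r2)"
    and "SF_pair F r1 r2 X"
  shows "ACR R k F X"
proof -
  have "c1 $ X = c2 $ X" if eq: "pos_equilibrium R k F c1" "pos_equilibrium R k F c2" for c1 c2
  proof -
    have "(F r1 - F r2) \<bullet> (ln_vec c2 - ln_vec c1) = 0"
      using deficiency_zero_PL_RDK_inner_ln_diff_eq[OF assms(1-4) eq assms(6-8)]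
      by (simp add: inner_diff_left)
    then have "ln (c2 $ X) = ln (c1 $ X)"
      using assms(9) unfolding inner_diff_SF_pair[OF assms(9)] SF_pair_def ln_vec_def by simp
    then show ?thesis
      using eq by (simp add: pos_equilibrium_def)
  qed
  then show ?thesis
    unfolding ACR_def using assms(5) by blast
qed

end
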